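(* Let $V_1,V_2$ be vertex operator algebras, $W$ a weak $V_1\otimes V_2$-module and $W_2$ a finitely generated weak $V_2$-module. Then $\mathrm{Hom}_{V_2}(W_2,W)$ is a weak $V_1$-module with $(Y(v_{(1)},x)f)(w_{(2)})=Y(v_{(1)}\otimes\mathbf 1,x)f(w_{(2)})$ for $v_{(1)}\in V_1$, $f\in\mathrm{Hom}_{V_2}(W_2,W)$, $w_{(2)}\in W_2$. Moreover, if $W_2$ is an (ordinary) $V_2$-module and $W$ is an (ordinary) $V_1\otimes V_2$-module on which $L^1(0)$ or $L^2(0)$ acts semisimply, then $\mathrm{Hom}_{V_2}(W_2,W)$ is an (ordinary) $V_1$-module.
   Context: Weak modules for a vertex operator algebra $U$ with vacuum $\mathbf 1$: vector space $M$ with $Y_M:U\to(\mathrm{End}\,M)[[x,x^{-1}]]$ such that $Y_M(u,x)m\in M((x))$, $Y_M(\mathbf 1,x)=\mathrm{id}$, and the Jacobi identity $x_0^{-1}\delta(\frac{x_1-x_2}{x_0})Y_M(u,x_1)Y_M(v,x_2)-x_0^{-1}\delta(\frac{x_2-x_1}{-x_0})Y_M(v,x_2)Y_M(u,x_1)=x_2^{-1}\delta(\frac{x_1-x_0}{x_2})Y_M(Y(u,x_0)v,x_2)$ holds, where $\delta(x)=\sum_{n\in\mathbb Z}x^n$ and binomials are expanded in nonnegative powers of the second variable. An (ordinary) module is a weak module on which $L(0)$ acts semisimply, $M=\coprod_{h\in\mathbb C}M_{(h)}$, with $\dim M_{(h)}<\infty$ and $M_{(h+n)}=0$ for all sufficiently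 negative integers $n$. $V_1\otimes V_2$ is the tensor product vertex operator algebra; $V_1$ and $V_2$ are identified with the subalgebras $V_1\otimes\mathbf 1$ and $\mathbf 1\otimes V_2$, so that a weak $V_1\otimes V_2$-module is a weak $V_1$-module and a weak $V_2$-module with commuting actions. $L^1(n)$ and $L^2(n)$ denote the Virasoro operators from the Virasoro elements of $V_1$ and $V_2$; $L^1(n)+L^2(n)$ are those of $V_1\otimes V_2$. A weak $V_2$-module is finitely generated if it is generated by a finite-dimensional subspace. *)

theory Defs
  imports Complex_Main "HOL-Library.Function_Algebras" "HOL-Library.Groups_Big_Fun"
begin

class cvec = ab_group_add +
  fixes scaleC :: "complex \<Rightarrow> 'a \<Rightarrow> 'a" (infixr \<open>*\<^sub>C\<close> 75)
  assumes scaleC_add_right: "a *\<^sub>C (x + y) = a *\<^sub>C x + a *\<^sub>C y"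
    and scaleC_add_left: "(a + b) *\<^sub>C x = a *\<^sub>C x + b *\<^sub>C x"
    and scaleC_scaleC: "a *\<^sub>C (b *\<^sub>C x) = (a * b) *\<^sub>C x"
    and scaleC_one: "1 *\<^sub>C x = x"

global_interpretation cv: vector_space "scaleC :: complex \<Rightarrow> 'a::cvec \<Rightarrow> 'a"
  by unfold_locales (simp_all add: scaleC_add_right scaleC_add_left scaleC_scaleC scaleC_one)

instantiation "fun" :: (type, cvec) cvec
begin
definition scaleC_fun :: "complex \<Rightarrow> ('a \<Rightarrow> 'b) \<Rightarrow> 'a \<Rightarrow> 'b" where
  "scaleC_fun c f = (\<lambda>x. c *\<^sub>C f x)"
instance
  by standard (simp_all add: scaleC_fun_def fun_eq_iff scaleC_add_right scaleC_add_left
      scaleC_scaleC scaleC_one)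
end

definition clinear_on :: "'a::cvec set \<Rightarrow> ('a \<Rightarrow> 'b::cvec) \<Rightarrow> bool" where
  "clinear_on S f \<longleftrightarrow> (\<forall>x\<in>S. \<forall>y\<in>S. f (x + y) = f x + f y) \<and>
                       (\<forall>c. \<forall>x\<in>S. f (c *\<^sub>C x) = c *\<^sub>C f x)"

definition fin_dim :: "'a::cvec set \<Rightarrow> bool" where
  "fin_dim S \<longleftrightarrow> (\<exists>B. finite B \<and> S \<subseteq> cv.span B)"

definition eigsp :: "'a::cvec set \<Rightarrow> ('a \<Rightarrow> 'a) \<Rightarrow> complex \<Rightarrow> 'a set" where
  "eigsp M T h = {w \<in> M. T w = h *\<^sub>C w}"

definition acts_semisimply :: "'a::cvec set \<Rightarrow> ('a \<Rightarrow> 'a) \<Rightarrow> bool" where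
  "acts_semisimply M T \<longleftrightarrow> M = cv.span (\<Union>h. eigsp M T h)"

definition ordinary_grading :: "'a::cvec set \<Rightarrow> ('a \<Rightarrow> 'a) \<Rightarrow> bool" where
  "ordinary_grading M L0 \<longleftrightarrow>
     acts_semisimply M L0 \<and>
     (\<forall>h. fin_dim (eigsp M L0 h)) \<and>
     (\<forall>h. \<exists>N::int. \<forall>n::int. n < N \<longrightarrow> eigsp M L0 (h + of_int n) = {0})"

text \<open>Vertex operators are encoded by their modes: vop V u n v is the coefficient
  u_n v of x^(-n-1) in Y(u,x)v.\<close>

record 'v voa_data =
  vspace :: "'v set"
  vac :: 'v
  vop :: "'v \<Rightarrow> int \<Rightarrow> 'v \<Rightarrow> 'v"
  conf :: 'v

text \<open>The Jacobi identity, written coefficientwise: the coefficient of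
  x0^(-l-1) x1^(-m-1) x2^(-n-1) in the Jacobi identity applied to w.
  All sums have finitely many nonzero terms by truncation.\<close>
definition jacobi :: "'v voa_data \<Rightarrow> 'm::cvec set \<Rightarrow> ('v \<Rightarrow> int \<Rightarrow> 'm \<Rightarrow> 'm) \<Rightarrow> bool" where
  "jacobi V M Y \<longleftrightarrow>
    (\<forall>u\<in>vspace V. \<forall>v\<in>vspace V. \<forall>w\<in>M. \<forall>l m n :: int.
       (\<Sum>i::nat. ((of_int m :: complex) gchoose i) *\<^sub>C Y (vop V u (l + int i) v) (m + n - int i) w)
     = (\<Sum>i::nat. ((-1) ^ i * ((of_int l :: complex) gchoose i)) *\<^sub>C
                      Y u (l + m - int i) (Y v (n + int i) w))
     - (\<Sum>i::nat. (((-1::complex) powi (l + int i)) * ((of_int l :: complex) gchoose i)) *\<^sub>C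
                      Y v (l + n - int i) (Y u (m + int i) w)))"

definition weak_module :: "'v::cvec voa_data \<Rightarrow> 'm::cvec set \<Rightarrow> ('v \<Rightarrow> int \<Rightarrow> 'm \<Rightarrow> 'm) \<Rightarrow> bool" where
  "weak_module V M Y \<longleftrightarrow>
     cv.subspace M \<and>
     (\<forall>u\<in>vspace V. \<forall>n. \<forall>w\<in>M. Y u n w \<in> M) \<and>
     (\<forall>u\<in>vspace V. \<forall>n. clinear_on M (Y u n)) \<and>
     (\<forall>n. \<forall>w\<in>M. clinear_on (vspace V) (\<lambda>u. Y u n w)) \<and>
     (\<forall>u\<in>vspace V. \<forall>w\<in>M. \<exists>N::int. \<forall>n\<ge>N. Y u n w = 0) \<and>
     (\<forall>n. \<forall>w\<in>M. Y (vac V) n w = (if n = -1 then w else 0)) \<and>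
     jacobi V M Y"

definition vir :: "'v voa_data \<Rightarrow> ('v \<Rightarrow> int \<Rightarrow> 'm \<Rightarrow> 'm) \<Rightarrow> int \<Rightarrow> 'm \<Rightarrow> 'm" where
  "vir V Y n = Y (conf V) (n + 1)"

definition is_voa :: "'v::cvec voa_data \<Rightarrow> bool" where
  "is_voa V \<longleftrightarrow>
     cv.subspace (vspace V) \<and> vac V \<in> vspace V \<and> conf V \<in> vspace V \<and>
     \<comment> \<open>Y : V -> (End V)[[x,x^-1]] linear, truncation, vacuum and Jacobi identity\<close>
     weak_module V (vspace V) (vop V) \<and>
     \<comment> \<open>creation property\<close>
     (\<forall>v\<in>vspace V. (\<forall>n\<ge>0. vop V v n (vac V) = 0) \<and> vop V v (-1) (vac V) = v) \<and>
     \<comment> \<open>Virasoro relations with some central charge c\<close>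
     (\<exists>c::complex. \<forall>m n::int. \<forall>v\<in>vspace V.
        vir V (vop V) m (vir V (vop V) n v) - vir V (vop V) n (vir V (vop V) m v)
        = of_int (m - n) *\<^sub>C vir V (vop V) (m + n) v
          + (if m + n = 0 then (of_int (m ^ 3 - m) / 12 * c) *\<^sub>C v else 0)) \<and>
     \<comment> \<open>L(-1)-derivative property: d/dx Y(v,x) = Y(L(-1)v,x)\<close>
     (\<forall>v\<in>vspace V. \<forall>n::int. \<forall>w\<in>vspace V.
        vop V (vir V (vop V) (-1) v) n w = (- of_int n) *\<^sub>C vop V v (n - 1) w) \<and>
     \<comment> \<open>V = direct sum of V_(n), n in Z, L(0)v = n v on V_(n), dim V_(n) finite,
         V_(n) = 0 for n sufficiently negative\<close>
     vspace V = cv.span (\<Union>n::int. eigsp (vspace V) (vir V (vop V) 0) (of_int n)) \<and>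
     (\<forall>n::int. fin_dim (eigsp (vspace V) (vir V (vop V) 0) (of_int n))) \<and>
     (\<exists>N::int. \<forall>n::int. n < N \<longrightarrow> eigsp (vspace V) (vir V (vop V) 0) (of_int n) = {0})"

definition ordinary_module :: "'v::cvec voa_data \<Rightarrow> 'm::cvec set \<Rightarrow> ('v \<Rightarrow> int \<Rightarrow> 'm \<Rightarrow> 'm) \<Rightarrow> bool" where
  "ordinary_module V M Y \<longleftrightarrow> weak_module V M Y \<and> ordinary_grading M (vir V Y 0)"

definition gen_submodule :: "'v::cvec voa_data \<Rightarrow> 'm::cvec set \<Rightarrow> ('v \<Rightarrow> int \<Rightarrow> 'm \<Rightarrow> 'm) \<Rightarrow> 'm set \<Rightarrow> 'm set" where
  "gen_submodule V M Y S =
     \<Inter>{N. cv.subspace N \<and> N \<subseteq> M \<and> S \<subseteq> N \<and> (\<forall>u\<in>vspace V. \<forall>n. \<forall>w\<in>N. Y u n w \<in> N)}"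

definition finitely_generated :: "'v::cvec voa_data \<Rightarrow> 'm::cvec set \<Rightarrow> ('v \<Rightarrow> int \<Rightarrow> 'm \<Rightarrow> 'm) \<Rightarrow> bool" where
  "finitely_generated V M Y \<longleftrightarrow>
     (\<exists>S. cv.subspace S \<and> fin_dim S \<and> S \<subseteq> M \<and> gen_submodule V M Y S = M)"

text \<open>Following the standing identification, a weak V1 \<otimes> V2-module W is a weak V1-module
  (Y1, giving Y(v1 \<otimes> 1,x)) and a weak V2-module (Y2, giving Y(1 \<otimes> v2,x)) on the same
  space W with commuting actions.\<close>
definition weak_tensor_module ::
  "'v1::cvec voa_data \<Rightarrow> 'v2::cvec voa_data \<Rightarrow> 'm::cvec set \<Rightarrow>
   ('v1 \<Rightarrow> int \<Rightarrow> 'm \<Rightarrow> 'm) \<Rightarrow> ('v2 \<Rightarrow> int \<Rightarrow> 'm \<Rightarrow> 'm) \<Rightarrow> bool" where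
  "weak_tensor_module V1 V2 W Y1 Y2 \<longleftrightarrow>
     weak_module V1 W Y1 \<and> weak_module V2 W Y2 \<and>
     (\<forall>u\<in>vspace V1. \<forall>v\<in>vspace V2. \<forall>m n. \<forall>w\<in>W. Y1 u m (Y2 v n w) = Y2 v n (Y1 u m w))"

definition ordinary_tensor_module ::
  "'v1::cvec voa_data \<Rightarrow> 'v2::cvec voa_data \<Rightarrow> 'm::cvec set \<Rightarrow>
   ('v1 \<Rightarrow> int \<Rightarrow> 'm \<Rightarrow> 'm) \<Rightarrow> ('v2 \<Rightarrow> int \<Rightarrow> 'm \<Rightarrow> 'm) \<Rightarrow> bool" where
  "ordinary_tensor_module V1 V2 W Y1 Y2 \<longleftrightarrow>
     weak_tensor_module V1 V2 W Y1 Y2 \<and>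
     ordinary_grading W (\<lambda>w. vir V1 Y1 0 w + vir V2 Y2 0 w)"

definition hom_space ::
  "'v2::cvec voa_data \<Rightarrow> 'm2::cvec set \<Rightarrow> ('v2 \<Rightarrow> int \<Rightarrow> 'm2 \<Rightarrow> 'm2) \<Rightarrow>
   'm::cvec set \<Rightarrow> ('v2 \<Rightarrow> int \<Rightarrow> 'm \<Rightarrow> 'm) \<Rightarrow> ('m2 \<Rightarrow> 'm) set" where
  "hom_space V2 W2 Y2' W Y2 =
     {f. clinear_on W2 f \<and> (\<forall>x\<in>W2. f x \<in> W) \<and>
         (\<forall>v\<in>vspace V2. \<forall>n. \<forall>x\<in>W2. f (Y2' v n x) = Y2 v n (f x)) \<and>
         (\<forall>x. x \<notin> W2 \<longrightarrow> f x = 0)}"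

definition hom_vop :: "('v1 \<Rightarrow> int \<Rightarrow> 'm \<Rightarrow> 'm) \<Rightarrow> 'v1 \<Rightarrow> int \<Rightarrow> ('m2 \<Rightarrow> 'm) \<Rightarrow> ('m2 \<Rightarrow> 'm)" where
  "hom_vop Y1 u n f = (\<lambda>w. Y1 u n (f w))"

end

theory Submission
  imports Defs
begin

(*
  The modes of V1 act on Hom_V2(W2, W) by post-composition, which preserves V2-linearity because
  the actions of V1 and V2 on W commute. All weak module axioms then hold pointwise except
  truncation; for that, note that a homomorphism is determined by its values on a finite
  generating set B of W2: any V2-submodule of W containing f(B) contains f(W2).

  For the grading, L^1(0) acts semisimply on W: if only L^2(0) is assumed to, then L^2(0) is
  semisimple on each eigenspace of L(0) = L^1(0) + L^2(0), and L^1(0) acts by scalars on its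
  eigenvectors there. The values f(B) lie in finitely many L^1(0)-eigenspaces, whose sum is
  V2-stable and therefore contains f(W2); composing f with the Lagrange interpolation
  polynomials in L^1(0) splits f into L^1(0)-eigenvectors of Hom. Choosing the generators to be
  L^2(0)-eigenvectors c of weight k_c, restriction to them embeds the h-eigenspace of Hom into
  the sum of the L(0)-eigenspaces W_(h + k_c), which gives finite dimensionality and the lower
  bound on the weights.
*)

section \<open>Linear algebra on subspaces\<close>

lemma clinear_on_add: "clinear_on A g \<Longrightarrow> x \<in> A \<Longrightarrow> y \<in> A \<Longrightarrow> g (x + y) = g x + g y"
  unfolding clinear_on_def by blast

lemma clinear_on_scale: "clinear_on A g \<Longrightarrow> x \<in> A \<Longrightarrow> g (c *\<^sub>C x) = c *\<^sub>C g x"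
  unfolding clinear_on_def by blast

lemma clinear_on_zero: "clinear_on A g \<Longrightarrow> 0 \<in> A \<Longrightarrow> g 0 = 0"
  using clinear_on_scale[of A g 0 0] by simp

lemma clinear_on_diff:
  assumes "cv.subspace A" "clinear_on A g" "x \<in> A" "y \<in> A"
  shows "g (x - y) = g x - g y"
proof -
  have "x - y \<in> A" using assms cv.subspace_diff by blast
  then have "g x = g (x - y) + g y"
    using clinear_on_add[OF assms(2), of "x - y" y] assms by simp
  then show ?thesis by (simp add: algebra_simps)
qed

lemma clinear_on_subset: "clinear_on A g \<Longrightarrow> B \<subseteq> A \<Longrightarrow> clinear_on B g"
  unfolding clinear_on_def by blast

lemma clinear_on_compose:
  assumes "clinear_on A f" "\<And>x. x \<in> A \<Longrightarrow> f x \<in> B" "clinear_on B g"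
  shows "clinear_on A (\<lambda>x. g (f x))"
  using assms unfolding clinear_on_def by simp

lemma clinear_on_ident: "clinear_on A (\<lambda>x. x)"
  unfolding clinear_on_def by simp

lemma clinear_on_scaleC: "clinear_on A f \<Longrightarrow> clinear_on A (\<lambda>x. c *\<^sub>C f x)"
  unfolding clinear_on_def by (simp add: scaleC_add_right scaleC_scaleC mult.commute)

lemma clinear_on_minus:
  "clinear_on A f \<Longrightarrow> clinear_on A g \<Longrightarrow> clinear_on A (\<lambda>x. f x - g x)"
  unfolding clinear_on_def by (simp add: cv.scale_right_diff_distrib)

lemma clinear_on_sum:
  assumes "\<And>i. i \<in> I \<Longrightarrow> clinear_on A (f i)"
  shows "clinear_on A (\<lambda>x. \<Sum>i\<in>I. f i x)"
  using assms unfolding clinear_on_def by (simp add: sum.distrib cv.scale_sum_right)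

lemma subspace_clinear_preimage:
  assumes "cv.subspace A" "clinear_on A g" "cv.subspace B"
  shows "cv.subspace {x \<in> A. g x \<in> B}"
  unfolding cv.subspace_def
proof (intro conjI ballI allI)
  show "0 \<in> {x \<in> A. g x \<in> B}"
    using cv.subspace_0[OF assms(1)] cv.subspace_0[OF assms(3)] clinear_on_zero[OF assms(2)]
    by simp
  show "x + y \<in> {x \<in> A. g x \<in> B}" if "x \<in> {x \<in> A. g x \<in> B}" "y \<in> {x \<in> A. g x \<in> B}" for x y
    using that cv.subspace_add[OF assms(1)] cv.subspace_add[OF assms(3)] clinear_on_add[OF assms(2)]
    by auto
  show "c *\<^sub>C x \<in> {x \<in> A. g x \<in> B}" if "x \<in> {x \<in> A. g x \<in> B}" for c x
    using that cv.subspace_scale[OF assms(1)] cv.subspace_scale[OF assms(3)]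
      clinear_on_scale[OF assms(2)] by auto
qed

lemma subspace_common_kernel:
  assumes "cv.subspace A" "\<And>i. i \<in> I \<Longrightarrow> clinear_on A (g i)"
  shows "cv.subspace {y \<in> A. \<forall>i\<in>I. g i y = 0}"
  unfolding cv.subspace_def
proof (intro conjI ballI allI)
  show "0 \<in> {y \<in> A. \<forall>i\<in>I. g i y = 0}"
    using cv.subspace_0[OF assms(1)] clinear_on_zero[OF assms(2)] by simp
  show "x + y \<in> {y \<in> A. \<forall>i\<in>I. g i y = 0}"
    if "x \<in> {y \<in> A. \<forall>i\<in>I. g i y = 0}" "y \<in> {y \<in> A. \<forall>i\<in>I. g i y = 0}" for x y
    using that cv.subspace_add[OF assms(1)] clinear_on_add[OF assms(2)] by simp
  show "c *\<^sub>C x \<in> {y \<in> A. \<forall>i\<in>I. g i y = 0}" if "x \<in> {y \<in> A. \<forall>i\<in>I. g i y = 0}" for c x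
    using that cv.subspace_scale[OF assms(1)] clinear_on_scale[OF assms(2)] by simp
qed

lemma subspace_clinear_equalizer:
  assumes "cv.subspace A" "clinear_on A F" "clinear_on A G"
  shows "cv.subspace {x \<in> A. F x = G x}"
  using subspace_clinear_preimage[OF assms(1) clinear_on_minus[OF assms(2,3)] cv.subspace_single_0]
  by simp

lemma subspace_eigsp: "cv.subspace M \<Longrightarrow> clinear_on M T \<Longrightarrow> cv.subspace (eigsp M T h)"
  unfolding eigsp_def by (intro subspace_clinear_equalizer clinear_on_scaleC clinear_on_ident)

lemma eigsp_subset: "eigsp M T h \<subseteq> M"
  unfolding eigsp_def by blast

lemma clinear_on_eq_on_span:
  assumes "cv.subspace M" "clinear_on M F" "clinear_on M G" "S \<subseteq> M"
    "\<And>y. y \<in> S \<Longrightarrow> F y = G y" "y \<in> cv.span S"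
  shows "F y = G y"
proof -
  have "cv.span S \<subseteq> {x \<in> M. F x = G x}"
    using assms(4,5) by (intro cv.span_minimal subspace_clinear_equalizer assms(1-3)) auto
  then show ?thesis using assms(6) by blast
qed

lemma eigsp_invariant:
  assumes "clinear_on M g" "\<And>y. y \<in> M \<Longrightarrow> g y \<in> M" "\<And>y. y \<in> M \<Longrightarrow> g (T y) = T (g y)"
    and "y \<in> eigsp M T h"
  shows "g y \<in> eigsp M T h"
proof -
  have y: "y \<in> M" "T y = h *\<^sub>C y" using assms(4) unfolding eigsp_def by auto
  then have "T (g y) = h *\<^sub>C g y" using assms(3) clinear_on_scale[OF assms(1)] by metis
  then show ?thesis using assms(2) y(1) unfolding eigsp_def by simp
qed

lemma span_UN_invariant:
  assumes "cv.subspace M" "clinear_on M g" "\<And>i. i \<in> I \<Longrightarrow> E i \<subseteq> M"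
    "\<And>i y. i \<in> I \<Longrightarrow> y \<in> E i \<Longrightarrow> g y \<in> E i" "y \<in> cv.span (\<Union>i\<in>I. E i)"
  shows "g y \<in> cv.span (\<Union>i\<in>I. E i)"
proof -
  have "cv.span (\<Union>i\<in>I. E i) \<subseteq> {y \<in> M. g y \<in> cv.span (\<Union>i\<in>I. E i)}"
    using assms(3,4) cv.span_base
    by (intro cv.span_minimal subspace_clinear_preimage assms(1,2) cv.subspace_span) blast
  then show ?thesis using assms(5) by blast
qed

lemma acts_semisimplyI:
  assumes "cv.subspace M" "M \<subseteq> cv.span (\<Union>h. eigsp M T h)"
  shows "acts_semisimply M T"
  unfolding acts_semisimply_def
  using assms cv.span_minimal[OF _ assms(1), of "\<Union>h. eigsp M T h"] eigsp_subset by blast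

lemma finite_subset_span_UN:
  assumes "finite B" "B \<subseteq> cv.span (\<Union>i\<in>I. E i)"
  shows "\<exists>J. finite J \<and> J \<subseteq> I \<and> B \<subseteq> cv.span (\<Union>i\<in>J. E i)"
  using assms
proof (induction B rule: finite_induct)
  case empty
  show ?case by blast
next
  case (insert b B)
  then obtain J where J: "finite J" "J \<subseteq> I" "B \<subseteq> cv.span (\<Union>i\<in>J. E i)"
    by auto
  have "b \<in> cv.span (\<Union>i\<in>I. E i)" using insert.prems by simp
  then obtain t r where t: "finite t" "t \<subseteq> (\<Union>i\<in>I. E i)" "b = (\<Sum>a\<in>t. r a *\<^sub>C a)"
    unfolding cv.span_explicit by blast
  have "\<forall>a\<in>t. \<exists>i\<in>I. a \<in> E i" using t(2) by blast
  then obtain k where k: "\<And>a. a \<in> t \<Longrightarrow> k a \<in> I \<and> a \<in> E (k a)" by metis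
  let ?J = "J \<union> k ` t"
  have "b \<in> cv.span (\<Union>i\<in>?J. E i)"
    unfolding t(3) using k by (intro cv.span_sum cv.span_scale cv.span_base) blast
  moreover have "cv.span (\<Union>i\<in>J. E i) \<subseteq> cv.span (\<Union>i\<in>?J. E i)"
    by (intro cv.span_mono) blast
  ultimately have "insert b B \<subseteq> cv.span (\<Union>i\<in>?J. E i)" using J(3) by blast
  moreover have "finite ?J" "?J \<subseteq> I" using J(1,2) t(1) k by auto
  ultimately show ?case by blast
qed

lemma fin_dim_obtain_basis:
  assumes "fin_dim S"
  obtains B where "finite B" "B \<subseteq> S" "S \<subseteq> cv.span B"
proof -
  obtain B0 where B0: "finite B0" "S \<subseteq> cv.span B0" using assms unfolding fin_dim_def by blast
  obtain B where B: "B \<subseteq> S" "cv.independent B" "S \<subseteq> cv.span B"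
    by (rule cv.basis_exists)
  have "finite B" using cv.independent_span_bound[OF B0(1) B(2)] B(1) B0(2) by blast
  with B that show ?thesis by blast
qed

lemma module_hom_scaleC_iff:
  "module_hom scaleC scaleC (f :: 'a::cvec \<Rightarrow> 'b::cvec) \<longleftrightarrow>
     (\<forall>x y. f (x + y) = f x + f y) \<and> (\<forall>c x. f (c *\<^sub>C x) = c *\<^sub>C f x)"
  unfolding module_hom_def module_hom_axioms_def by (auto intro: cv.module_axioms)

lemma fin_dim_inj_linear_image:
  assumes f: "module_hom scaleC scaleC (f :: 'a::cvec \<Rightarrow> 'b::cvec)"
    and U: "cv.subspace U" and inj: "inj_on f U" and "f ` U \<subseteq> X" and "fin_dim X"
  shows "fin_dim U"
proof -
  obtain B where B: "B \<subseteq> U" "cv.independent B" "U \<subseteq> cv.span B"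
    by (rule cv.basis_exists)
  have "cv.span B \<subseteq> U" using cv.span_minimal[OF B(1) U] .
  then have "cv.independent (f ` B)"
    using module_hom.independent_injective_image[OF f B(2)] inj_on_subset[OF inj] by blast
  moreover obtain T where "finite T" "X \<subseteq> cv.span T"
    using \<open>fin_dim X\<close> unfolding fin_dim_def by blast
  ultimately have "finite (f ` B)"
    using cv.independent_span_bound \<open>f ` U \<subseteq> X\<close> B(1) by blast
  then have "finite B" using finite_image_iff inj_on_subset[OF inj B(1)] by blast
  then show ?thesis using B(3) unfolding fin_dim_def by blast
qed

lemma span_image_point_fun:
  fixes a :: 'a and w :: "'b::cvec"
  assumes "w \<in> cv.span B"
  shows "(\<lambda>x. if x = a then w else 0) \<in> cv.span ((\<lambda>b x. if x = a then b else 0) ` B)"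
  using assms
proof (induction rule: cv.span_induct_alt)
  case base
  show ?case
    using cv.span_zero[of "(\<lambda>b x. if x = a then b else 0) ` B"] by (simp add: zero_fun_def)
next
  case (step c b y)
  have "(\<lambda>x. if x = a then c *\<^sub>C b + y else 0)
      = c *\<^sub>C (\<lambda>x. if x = a then b else 0) + (\<lambda>x. if x = a then y else 0)"
    by (simp add: fun_eq_iff scaleC_fun_def cv.scale_zero_right)
  moreover have "(\<lambda>x. if x = a then b else 0) \<in> cv.span ((\<lambda>b x. if x = a then b else 0) ` B)"
    using step(1) by (intro cv.span_base image_eqI) simp_all
  ultimately show ?case using step(2) by (simp add: cv.span_add cv.span_scale)
qed

lemma fin_dim_finite_support:
  assumes "finite C" "\<And>c. c \<in> C \<Longrightarrow> fin_dim (E c)"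
  shows "fin_dim {g :: 'a \<Rightarrow> 'b::cvec. \<forall>x. (x \<in> C \<longrightarrow> g x \<in> E x) \<and> (x \<notin> C \<longrightarrow> g x = 0)}"
  using assms
proof (induction C rule: finite_induct)
  case empty
  have "{g :: 'a \<Rightarrow> 'b. \<forall>x. g x = 0} \<subseteq> cv.span {}"
  proof
    fix g :: "'a \<Rightarrow> 'b" assume "g \<in> {g. \<forall>x. g x = 0}"
    then have "g = 0" by (simp add: fun_eq_iff)
    then show "g \<in> cv.span {}" using cv.span_zero by simp
  qed
  then show ?case unfolding fin_dim_def by blast
next
  case (insert a C)
  let ?G = "\<lambda>C. {g :: 'a \<Rightarrow> 'b. \<forall>x. (x \<in> C \<longrightarrow> g x \<in> E x) \<and> (x \<notin> C \<longrightarrow> g x = 0)}"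
  let ?\<delta> = "\<lambda>b x. if x = a then b else 0"
  have "fin_dim (?G C)" using insert.IH insert.prems by simp
  then obtain D where D: "finite D" "?G C \<subseteq> cv.span D"
    unfolding fin_dim_def by blast
  have "fin_dim (E a)" using insert.prems by simp
  then obtain Ba where Ba: "finite Ba" "E a \<subseteq> cv.span Ba"
    unfolding fin_dim_def by blast
  have "g \<in> cv.span (D \<union> ?\<delta> ` Ba)" if g: "g \<in> ?G (insert a C)" for g
  proof -
    have "g(a := 0) \<in> ?G C" using g insert.hyps(2) by auto
    then have "g(a := 0) \<in> cv.span (D \<union> ?\<delta> ` Ba)"
      using D(2) cv.span_mono[of D] by blast
    moreover have "g a \<in> cv.span Ba" using g Ba(2) by blast
    then have "?\<delta> (g a) \<in> cv.span (?\<delta> ` Ba)" by (rule span_image_point_fun)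
    then have "?\<delta> (g a) \<in> cv.span (D \<union> ?\<delta> ` Ba)"
      using cv.span_mono[of "?\<delta> ` Ba" "D \<union> ?\<delta> ` Ba"] by blast
    ultimately have "g(a := 0) + ?\<delta> (g a) \<in> cv.span (D \<union> ?\<delta> ` Ba)"
      by (rule cv.span_add)
    moreover have "g(a := 0) + ?\<delta> (g a) = g" by (simp add: fun_eq_iff)
    ultimately show ?thesis by simp
  qed
  moreover have "finite (D \<union> ?\<delta> ` Ba)" using D(1) Ba(1) by simp
  ultimately show ?case unfolding fin_dim_def by blast
qed

section \<open>Lagrange projections onto eigenspaces\<close>

primrec poly_op :: "('a::cvec \<Rightarrow> 'a) \<Rightarrow> complex list \<Rightarrow> 'a \<Rightarrow> 'a" where
  "poly_op T [] y = y"
| "poly_op T (c # cs) y = T (poly_op T cs y) - c *\<^sub>C poly_op T cs y"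

(* The Lagrange interpolation polynomial in T that is 1 at h and 0 at the other elements of hs;
   repetitions in hs are harmless, as removeAll deletes every copy of h. *)
definition eig_proj :: "('a::cvec \<Rightarrow> 'a) \<Rightarrow> complex list \<Rightarrow> complex \<Rightarrow> 'a \<Rightarrow> 'a" where
  "eig_proj T hs h y =
     inverse (\<Prod>c\<leftarrow>removeAll h hs. h - c) *\<^sub>C poly_op T (removeAll h hs) y"

context
  fixes M :: "'a::cvec set" and T :: "'a \<Rightarrow> 'a"
  assumes M: "cv.subspace M" and T_clinear: "clinear_on M T"
    and T_mem: "\<And>y. y \<in> M \<Longrightarrow> T y \<in> M"
begin

lemma poly_op_mem: "y \<in> M \<Longrightarrow> poly_op T cs y \<in> M"
  by (induction cs) (auto intro: T_mem cv.subspace_diff[OF M] cv.subspace_scale[OF M])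

lemma poly_op_clinear: "clinear_on M (poly_op T cs)"
proof (induction cs)
  case Nil
  show ?case by (simp add: clinear_on_ident)
next
  case (Cons c cs)
  have "clinear_on M (\<lambda>y. T (poly_op T cs y) - c *\<^sub>C poly_op T cs y)"
    using clinear_on_minus[OF clinear_on_compose[OF Cons.IH poly_op_mem T_clinear]
        clinear_on_scaleC[OF Cons.IH]] .
  then show ?case by simp
qed

lemma poly_op_eigvec:
  assumes "y \<in> eigsp M T e"
  shows "poly_op T cs y = (\<Prod>c\<leftarrow>cs. e - c) *\<^sub>C y"
proof (induction cs)
  case Nil
  show ?case by (simp add: scaleC_one)
next
  case (Cons c cs)
  have y: "y \<in> M" "T y = e *\<^sub>C y" using assms unfolding eigsp_def by auto
  have "poly_op T (c # cs) y = ((\<Prod>c\<leftarrow>cs. e - c) * e) *\<^sub>C y - (c * (\<Prod>c\<leftarrow>cs. e - c)) *\<^sub>C y"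
    using Cons.IH clinear_on_scale[OF T_clinear y(1)] y(2) by (simp add: scaleC_scaleC)
  also have "\<dots> = ((\<Prod>c\<leftarrow>cs. e - c) * e - c * (\<Prod>c\<leftarrow>cs. e - c)) *\<^sub>C y"
    by (rule cv.scale_left_diff_distrib[symmetric])
  also have "(\<Prod>c\<leftarrow>cs. e - c) * e - c * (\<Prod>c\<leftarrow>cs. e - c) = (\<Prod>c\<leftarrow>c # cs. e - c)"
    by (simp add: algebra_simps)
  finally show ?case .
qed

lemma poly_op_commute:
  assumes g: "clinear_on M g" "\<And>y. y \<in> M \<Longrightarrow> g y \<in> M" "\<And>y. y \<in> M \<Longrightarrow> g (T y) = T (g y)"
    and y: "y \<in> M"
  shows "g (poly_op T cs y) = poly_op T cs (g y)"
proof (induction cs)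
  case Nil
  show ?case by simp
next
  case (Cons c cs)
  have p: "poly_op T cs y \<in> M" using poly_op_mem[OF y] .
  have "g (poly_op T (c # cs) y) = g (T (poly_op T cs y)) - g (c *\<^sub>C poly_op T cs y)"
    using clinear_on_diff[OF M g(1) T_mem[OF p] cv.subspace_scale[OF M p]] by simp
  also have "\<dots> = T (g (poly_op T cs y)) - c *\<^sub>C g (poly_op T cs y)"
    using g(3)[OF p] clinear_on_scale[OF g(1) p] by simp
  finally show ?case using Cons.IH by simp
qed

lemma eig_proj_mem: "y \<in> M \<Longrightarrow> eig_proj T hs h y \<in> M"
  unfolding eig_proj_def by (intro cv.subspace_scale[OF M] poly_op_mem)

lemma eig_proj_clinear: "clinear_on M (eig_proj T hs h)"
  unfolding eig_proj_def by (rule clinear_on_scaleC[OF poly_op_clinear])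

lemma eig_proj_commute:
  assumes "clinear_on M g" "\<And>y. y \<in> M \<Longrightarrow> g y \<in> M" "\<And>y. y \<in> M \<Longrightarrow> g (T y) = T (g y)"
    and "y \<in> M"
  shows "g (eig_proj T hs h y) = eig_proj T hs h (g y)"
  unfolding eig_proj_def
  using clinear_on_scale[OF assms(1) poly_op_mem[OF assms(4)]] poly_op_commute[OF assms] by simp

lemma eig_proj_eigvec:
  assumes "e \<in> set hs" and y: "y \<in> eigsp M T e"
  shows "eig_proj T hs h y = (if h = e then y else 0)"
proof (cases "h = e")
  case True
  have "(\<Prod>c\<leftarrow>removeAll h hs. h - c) \<noteq> 0" by (auto simp: prod_list_zero_iff)
  then show ?thesis
    unfolding eig_proj_def poly_op_eigvec[OF y] using True by (simp add: scaleC_scaleC scaleC_one)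
next
  case False
  then have "(\<Prod>c\<leftarrow>removeAll h hs. e - c) = 0"
    using assms(1) by (simp add: prod_list_zero_iff)
  then show ?thesis
    unfolding eig_proj_def poly_op_eigvec[OF y] using False by (simp add: scaleC_scaleC)
qed

lemma eig_proj_span:
  assumes y: "y \<in> cv.span (\<Union>e\<in>set hs. eigsp M T e)"
  shows "(\<Sum>h\<in>set hs. eig_proj T hs h y) = y" and "eig_proj T hs h y \<in> eigsp M T h"
proof -
  have sub: "(\<Union>e\<in>set hs. eigsp M T e) \<subseteq> M" using eigsp_subset by blast
  then have yM: "y \<in> M" using cv.span_minimal[OF sub M] y by blast
  show "(\<Sum>h\<in>set hs. eig_proj T hs h y) = y"
  proof (rule clinear_on_eq_on_span[OF M _ clinear_on_ident sub _ y])
    show "clinear_on M (\<lambda>y. \<Sum>h\<in>set hs. eig_proj T hs h y)"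
      by (intro clinear_on_sum eig_proj_clinear)
    fix z assume "z \<in> (\<Union>e\<in>set hs. eigsp M T e)"
    then obtain e where e: "e \<in> set hs" "z \<in> eigsp M T e" by blast
    then show "(\<Sum>h\<in>set hs. eig_proj T hs h z) = z"
      by (simp add: eig_proj_eigvec[OF e])
  qed
  have "T (eig_proj T hs h y) = h *\<^sub>C eig_proj T hs h y"
  proof (rule clinear_on_eq_on_span[OF M _ _ sub _ y])
    show "clinear_on M (\<lambda>y. T (eig_proj T hs h y))"
      using clinear_on_compose[OF eig_proj_clinear eig_proj_mem T_clinear] .
    show "clinear_on M (\<lambda>y. h *\<^sub>C eig_proj T hs h y)"
      by (rule clinear_on_scaleC[OF eig_proj_clinear])
    fix z assume "z \<in> (\<Union>e\<in>set hs. eigsp M T e)"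
    then obtain e where e: "e \<in> set hs" "z \<in> eigsp M T e" by blast
    then show "T (eig_proj T hs h z) = h *\<^sub>C eig_proj T hs h z"
      using eig_proj_eigvec[OF e] clinear_on_zero[OF T_clinear cv.subspace_0[OF M]]
      unfolding eigsp_def by simp
  qed
  then show "eig_proj T hs h y \<in> eigsp M T h"
    unfolding eigsp_def using eig_proj_mem[OF yM] by simp
qed

end

lemma acts_semisimply_invariant_subspace:
  assumes M: "cv.subspace M" and T: "clinear_on M T" "\<And>y. y \<in> M \<Longrightarrow> T y \<in> M"
    and ss: "acts_semisimply M T"
    and U: "cv.subspace U" "U \<subseteq> M" and TU: "\<And>y. y \<in> U \<Longrightarrow> T y \<in> U"
  shows "acts_semisimply U T"
proof (rule acts_semisimplyI[OF U(1)], rule subsetI)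
  fix u assume u: "u \<in> U"
  have TU_clinear: "clinear_on U T" using clinear_on_subset[OF T(1) U(2)] .
  have "{u} \<subseteq> cv.span (\<Union>h. eigsp M T h)"
    using u U(2) ss unfolding acts_semisimply_def by blast
  then obtain H where H: "finite H" "u \<in> cv.span (\<Union>h\<in>H. eigsp M T h)"
    using finite_subset_span_UN[of "{u}" "eigsp M T" UNIV] by auto
  obtain hs where hs: "set hs = H" using finite_list[OF H(1)] by blast
  have "eig_proj T hs h u \<in> eigsp U T h" for h
    using eig_proj_span(2)[OF M T, of u hs h] eig_proj_mem[OF U(1) TU_clinear TU u] H(2) hs
    unfolding eigsp_def by simp
  then have "(\<Sum>h\<in>set hs. eig_proj T hs h u) \<in> cv.span (\<Union>h. eigsp U T h)"
    by (intro cv.span_sum cv.span_base) blast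
  then show "u \<in> cv.span (\<Union>h. eigsp U T h)"
    using eig_proj_span(1)[OF M T, of u hs] H(2) hs by simp
qed

lemma acts_semisimply_summand:
  assumes M: "cv.subspace M"
    and A: "clinear_on M A" "\<And>y. y \<in> M \<Longrightarrow> A y \<in> M"
    and B: "clinear_on M B" "\<And>y. y \<in> M \<Longrightarrow> B y \<in> M"
    and AB: "\<And>y. y \<in> M \<Longrightarrow> A (B y) = B (A y)"
    and ss_sum: "acts_semisimply M (\<lambda>y. A y + B y)" and ss_B: "acts_semisimply M B"
  shows "acts_semisimply M A"
proof (rule acts_semisimplyI[OF M])
  let ?L = "\<lambda>y. A y + B y"
  have L_clinear: "clinear_on M ?L"
    using A(1) B(1) unfolding clinear_on_def by (simp add: scaleC_add_right)
  have "eigsp M ?L h \<subseteq> cv.span (\<Union>h. eigsp M A h)" for h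
  proof -
    let ?U = "eigsp M ?L h"
    have B_U: "B y \<in> ?U" if y: "y \<in> ?U" for y
    proof -
      have yM: "y \<in> M" and yL: "A y + B y = h *\<^sub>C y" using y unfolding eigsp_def by auto
      have "?L (B y) = B (A y + B y)"
        using AB[OF yM] clinear_on_add[OF B(1) A(2)[OF yM] B(2)[OF yM]] by simp
      also have "\<dots> = h *\<^sub>C B y" using yL clinear_on_scale[OF B(1) yM] by simp
      finally show ?thesis unfolding eigsp_def using B(2)[OF yM] by simp
    qed
    have "acts_semisimply ?U B"
      using acts_semisimply_invariant_subspace[OF M B ss_B subspace_eigsp[OF M L_clinear]
          eigsp_subset B_U] .
    moreover have "eigsp ?U B k \<subseteq> eigsp M A (h - k)" for k
    proof
      fix y assume "y \<in> eigsp ?U B k"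
      then have "y \<in> M" "A y + B y = h *\<^sub>C y" "B y = k *\<^sub>C y" unfolding eigsp_def by auto
      moreover from this have "A y = (h - k) *\<^sub>C y"
        by (simp add: cv.scale_left_diff_distrib eq_diff_eq)
      ultimately show "y \<in> eigsp M A (h - k)" unfolding eigsp_def by simp
    qed
    then have "cv.span (\<Union>k. eigsp ?U B k) \<subseteq> cv.span (\<Union>h. eigsp M A h)"
      by (intro cv.span_mono) blast
    ultimately show ?thesis unfolding acts_semisimply_def by simp
  qed
  then have "cv.span (\<Union>h. eigsp M ?L h) \<subseteq> cv.span (\<Union>h. eigsp M A h)"
    by (intro cv.span_minimal) blast+
  then show "M \<subseteq> cv.span (\<Union>h. eigsp M A h)"
    using ss_sum unfolding acts_semisimply_def by simp
qed

definition generates ::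
  "'v::cvec voa_data \<Rightarrow> 'm::cvec set \<Rightarrow> ('v \<Rightarrow> int \<Rightarrow> 'm \<Rightarrow> 'm) \<Rightarrow> 'm set \<Rightarrow> bool" where
  "generates V M Y B \<longleftrightarrow> M \<subseteq> gen_submodule V M Y B"

lemma generates_induct:
  assumes "generates V M Y B" "cv.subspace N" "N \<subseteq> M" "B \<subseteq> N"
    "\<And>u n x. u \<in> vspace V \<Longrightarrow> x \<in> N \<Longrightarrow> Y u n x \<in> N"
  shows "M \<subseteq> N"
  using assms unfolding generates_def gen_submodule_def by blast

lemma generates_span:
  assumes "generates V M Y B" "B \<subseteq> cv.span C"
  shows "generates V M Y C"
  unfolding generates_def
proof
  fix x assume "x \<in> M"
  show "x \<in> gen_submodule V M Y C"
    unfolding gen_submodule_def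
  proof (rule InterI, clarify)
    fix N assume N: "cv.subspace N" "N \<subseteq> M" "C \<subseteq> N" "\<forall>u\<in>vspace V. \<forall>n. \<forall>w\<in>N. Y u n w \<in> N"
    have "B \<subseteq> N" using assms(2) cv.span_minimal[OF N(3,1)] by blast
    then show "x \<in> N" using generates_induct[OF assms(1) N(1,2)] N(4) \<open>x \<in> M\<close> by blast
  qed
qed

lemma generates_by_eigvecs:
  assumes "acts_semisimply M T" "generates V M Y B" "finite B" "B \<subseteq> M"
  obtains C \<kappa> where "generates V M Y C" "finite C" "\<And>c. c \<in> C \<Longrightarrow> c \<in> eigsp M T (\<kappa> c)"
proof -
  have "B \<subseteq> cv.span (\<Union>c\<in>(\<Union>h. eigsp M T h). {c})"
    using ord_le_eq_trans[OF assms(4) assms(1)[unfolded acts_semisimply_def]] by simp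
  from finite_subset_span_UN[OF assms(3) this]
  obtain C where C: "finite C" "C \<subseteq> (\<Union>h. eigsp M T h)" "B \<subseteq> cv.span (\<Union>c\<in>C. {c})"
    by blast
  then have "generates V M Y C" using generates_span[OF assms(2)] by simp
  moreover obtain \<kappa> where "\<And>c. c \<in> C \<Longrightarrow> c \<in> eigsp M T (\<kappa> c)"
    using C(2) by (metis UN_iff subsetD)
  ultimately show ?thesis using C(1) that by blast
qed

lemma finitely_generated_obtain_generators:
  assumes "finitely_generated V M Y"
  obtains B where "generates V M Y B" "finite B" "B \<subseteq> M"
proof -
  obtain S where S: "fin_dim S" "S \<subseteq> M" "gen_submodule V M Y S = M"
    using assms unfolding finitely_generated_def by blast
  obtain B where B: "finite B" "B \<subseteq> S" "S \<subseteq> cv.span B" by (rule fin_dim_obtain_basis[OF S(1)])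
  have "generates V M Y S" unfolding generates_def using S(3) by simp
  then have "generates V M Y B" using B(3) by (rule generates_span)
  moreover have "B \<subseteq> M" using B(2) S(2) by blast
  ultimately show ?thesis using that B(1) by blast
qed

lemma sum_fun_apply: "(\<Sum>i\<in>I. (F i :: 'a \<Rightarrow> 'b::comm_monoid_add)) x = (\<Sum>i\<in>I. F i x)"
  by (induction I rule: infinite_finite_induct) auto

lemma Sum_any_fun_apply:
  fixes F :: "nat \<Rightarrow> 'a \<Rightarrow> 'b::comm_monoid_add"
  assumes "\<And>i. i \<ge> K \<Longrightarrow> F i = 0"
  shows "Sum_any F x = Sum_any (\<lambda>i. F i x)"
proof -
  have "{i. F i \<noteq> 0} \<subseteq> {..<K}" "{i. F i x \<noteq> 0} \<subseteq> {..<K}"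
    using assms by (force simp: not_less[symmetric])+
  then have "Sum_any F = sum F {..<K}" "Sum_any (\<lambda>i. F i x) = (\<Sum>i<K. F i x)"
    by (simp_all add: Sum_any.expand_superset)
  then show ?thesis by (simp add: sum_fun_apply)
qed

section \<open>The weak V1-module Hom_V2(W2, W)\<close>

lemma weak_module_subspace: "weak_module V M Y \<Longrightarrow> cv.subspace M"
  unfolding weak_module_def by blast

lemma weak_module_mem: "weak_module V M Y \<Longrightarrow> u \<in> vspace V \<Longrightarrow> w \<in> M \<Longrightarrow> Y u n w \<in> M"
  unfolding weak_module_def by blast

lemma weak_module_clinear: "weak_module V M Y \<Longrightarrow> u \<in> vspace V \<Longrightarrow> clinear_on M (Y u n)"
  unfolding weak_module_def by blast

lemma weak_module_clinear_vertex:
  "weak_module V M Y \<Longrightarrow> w \<in> M \<Longrightarrow> clinear_on (vspace V) (\<lambda>u. Y u n w)"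
  unfolding weak_module_def by blast

lemma weak_module_truncation:
  "weak_module V M Y \<Longrightarrow> u \<in> vspace V \<Longrightarrow> w \<in> M \<Longrightarrow> \<exists>N::int. \<forall>n\<ge>N. Y u n w = 0"
  unfolding weak_module_def by blast

lemma weak_module_vacuum:
  "weak_module V M Y \<Longrightarrow> w \<in> M \<Longrightarrow> Y (vac V) n w = (if n = -1 then w else 0)"
  unfolding weak_module_def by blast

lemma weak_module_jacobi: "weak_module V M Y \<Longrightarrow> jacobi V M Y"
  unfolding weak_module_def by blast

locale hom_space_setting =
  fixes V1 :: "'v1::cvec voa_data" and V2 :: "'v2::cvec voa_data"
    and W :: "'m::cvec set" and Y1 :: "'v1 \<Rightarrow> int \<Rightarrow> 'm \<Rightarrow> 'm" and Y2 :: "'v2 \<Rightarrow> int \<Rightarrow> 'm \<Rightarrow> 'm"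
    and W2 :: "'m2::cvec set" and Y2' :: "'v2 \<Rightarrow> int \<Rightarrow> 'm2 \<Rightarrow> 'm2"
  assumes tensor_module: "weak_tensor_module V1 V2 W Y1 Y2"
    and W2_module: "weak_module V2 W2 Y2'"
begin

abbreviation "Hom \<equiv> hom_space V2 W2 Y2' W Y2"

lemma W_V1_module: "weak_module V1 W Y1"
  and W_V2_module: "weak_module V2 W Y2"
  and actions_commute:
    "u \<in> vspace V1 \<Longrightarrow> v \<in> vspace V2 \<Longrightarrow> w \<in> W \<Longrightarrow> Y1 u m (Y2 v n w) = Y2 v n (Y1 u m w)"
  using tensor_module unfolding weak_tensor_module_def by auto

lemma zero_mem_W: "0 \<in> W"
  using cv.subspace_0[OF weak_module_subspace[OF W_V1_module]] .

lemma Y1_zero: "u \<in> vspace V1 \<Longrightarrow> Y1 u n 0 = 0"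
  using clinear_on_zero[OF weak_module_clinear[OF W_V1_module] zero_mem_W] .

lemma Y2_zero: "v \<in> vspace V2 \<Longrightarrow> Y2 v n 0 = 0"
  using clinear_on_zero[OF weak_module_clinear[OF W_V2_module] zero_mem_W] .

lemma hom_spaceD:
  assumes "f \<in> Hom"
  shows "clinear_on W2 f" "x \<in> W2 \<Longrightarrow> f x \<in> W"
    "v \<in> vspace V2 \<Longrightarrow> x \<in> W2 \<Longrightarrow> f (Y2' v n x) = Y2 v n (f x)" "x \<notin> W2 \<Longrightarrow> f x = 0"
  using assms unfolding hom_space_def by auto

lemma hom_space_apply_mem: "f \<in> Hom \<Longrightarrow> f x \<in> W"
  using hom_spaceD[of f] zero_mem_W by (cases "x \<in> W2") auto

lemma subspace_hom_space: "cv.subspace Hom"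
  unfolding cv.subspace_def
proof (intro conjI ballI allI)
  show "0 \<in> Hom"
    unfolding hom_space_def using zero_mem_W Y2_zero by (simp add: clinear_on_def)
next
  fix f g assume f: "f \<in> Hom" and g: "g \<in> Hom"
  show "f + g \<in> Hom" unfolding hom_space_def
  proof (intro CollectI conjI ballI allI impI)
    show "clinear_on W2 (f + g)"
      using hom_spaceD(1)[OF f] hom_spaceD(1)[OF g] unfolding clinear_on_def
      by (simp add: scaleC_add_right)
    show "(f + g) x \<in> W" for x
      using hom_space_apply_mem[OF f] hom_space_apply_mem[OF g]
        cv.subspace_add[OF weak_module_subspace[OF W_V2_module]] by simp
    show "(f + g) (Y2' v n x) = Y2 v n ((f + g) x)" if "v \<in> vspace V2" "x \<in> W2" for v n x
      using hom_spaceD(3)[OF f that] hom_spaceD(3)[OF g that] that hom_space_apply_mem f g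
        clinear_on_add[OF weak_module_clinear[OF W_V2_module]] by simp
    show "(f + g) x = 0" if "x \<notin> W2" for x
      using hom_spaceD(4)[OF f that] hom_spaceD(4)[OF g that] by simp
  qed
next
  fix c f assume f: "f \<in> Hom"
  show "c *\<^sub>C f \<in> Hom" unfolding hom_space_def scaleC_fun_def
  proof (intro CollectI conjI ballI allI impI)
    show "clinear_on W2 (\<lambda>x. c *\<^sub>C f x)" using clinear_on_scaleC[OF hom_spaceD(1)[OF f]] .
    show "c *\<^sub>C f x \<in> W" for x
      using hom_space_apply_mem[OF f] cv.subspace_scale[OF weak_module_subspace[OF W_V2_module]]
      by simp
    show "c *\<^sub>C f (Y2' v n x) = Y2 v n (c *\<^sub>C f x)" if "v \<in> vspace V2" "x \<in> W2" for v n x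
      using hom_spaceD(3)[OF f that] that hom_space_apply_mem f
        clinear_on_scale[OF weak_module_clinear[OF W_V2_module]] by simp
    show "c *\<^sub>C f x = 0" if "x \<notin> W2" for x using hom_spaceD(4)[OF f that] by simp
  qed
qed

lemma hom_space_compose:
  assumes P: "clinear_on W P" "\<And>y. y \<in> W \<Longrightarrow> P y \<in> W"
    "\<And>v n y. v \<in> vspace V2 \<Longrightarrow> y \<in> W \<Longrightarrow> P (Y2 v n y) = Y2 v n (P y)"
    and f: "f \<in> Hom"
  shows "(\<lambda>x. P (f x)) \<in> Hom"
  unfolding hom_space_def
proof (intro CollectI conjI ballI allI impI)
  show "clinear_on W2 (\<lambda>x. P (f x))"
    using clinear_on_compose[OF hom_spaceD(1)[OF f] hom_spaceD(2)[OF f] P(1)] .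
  show "P (f x) \<in> W" for x using P(2) hom_space_apply_mem[OF f] .
  show "P (f (Y2' v n x)) = Y2 v n (P (f x))" if "v \<in> vspace V2" "x \<in> W2" for v n x
    using hom_spaceD(3)[OF f that] P(3)[OF that(1) hom_space_apply_mem[OF f]] by simp
  show "P (f x) = 0" if "x \<notin> W2" for x
    using hom_spaceD(4)[OF f that] clinear_on_zero[OF P(1) zero_mem_W] by simp
qed

lemma hom_vop_mem:
  assumes "u \<in> vspace V1" "f \<in> Hom"
  shows "hom_vop Y1 u n f \<in> Hom"
  unfolding hom_vop_def
  using weak_module_clinear[OF W_V1_module assms(1)] weak_module_mem[OF W_V1_module assms(1)]
    actions_commute[OF assms(1)]
  by (intro hom_space_compose[OF _ _ _ assms(2)]) simp_all

lemma hom_vop_clinear: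
  assumes u: "u \<in> vspace V1"
  shows "clinear_on Hom (hom_vop Y1 u n)"
  unfolding clinear_on_def hom_vop_def
proof (intro conjI ballI allI)
  fix f g assume "f \<in> Hom" "g \<in> Hom"
  then show "(\<lambda>x. Y1 u n ((f + g) x)) = (\<lambda>x. Y1 u n (f x)) + (\<lambda>x. Y1 u n (g x))"
    using clinear_on_add[OF weak_module_clinear[OF W_V1_module u]] hom_space_apply_mem
    by (simp add: fun_eq_iff)
next
  fix c f assume "f \<in> Hom"
  then show "(\<lambda>x. Y1 u n ((c *\<^sub>C f) x)) = c *\<^sub>C (\<lambda>x. Y1 u n (f x))"
    using clinear_on_scale[OF weak_module_clinear[OF W_V1_module u]] hom_space_apply_mem
    by (simp add: fun_eq_iff scaleC_fun_def)
qed

lemma hom_vop_clinear_vertex: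
  assumes f: "f \<in> Hom"
  shows "clinear_on (vspace V1) (\<lambda>u. hom_vop Y1 u n f)"
  unfolding clinear_on_def hom_vop_def
proof (intro conjI ballI allI)
  fix u v assume "u \<in> vspace V1" "v \<in> vspace V1"
  then show "(\<lambda>x. Y1 (u + v) n (f x)) = (\<lambda>x. Y1 u n (f x)) + (\<lambda>x. Y1 v n (f x))"
    using clinear_on_add[OF weak_module_clinear_vertex[OF W_V1_module hom_space_apply_mem[OF f]]]
    by (simp add: fun_eq_iff)
next
  fix c u assume "u \<in> vspace V1"
  then show "(\<lambda>x. Y1 (c *\<^sub>C u) n (f x)) = c *\<^sub>C (\<lambda>x. Y1 u n (f x))"
    using clinear_on_scale[OF weak_module_clinear_vertex[OF W_V1_module hom_space_apply_mem[OF f]]]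
    by (simp add: fun_eq_iff scaleC_fun_def)
qed

lemma hom_vop_vacuum: "f \<in> Hom \<Longrightarrow> hom_vop Y1 (vac V1) n f = (if n = -1 then f else 0)"
  unfolding hom_vop_def
  using weak_module_vacuum[OF W_V1_module hom_space_apply_mem] by (auto simp: fun_eq_iff)

lemma hom_space_image_submodule:
  assumes B: "generates V2 W2 Y2' B" "B \<subseteq> W2" and f: "f \<in> Hom"
    and S: "cv.subspace S" "\<And>v n y. v \<in> vspace V2 \<Longrightarrow> y \<in> S \<Longrightarrow> Y2 v n y \<in> S"
    and "f ` B \<subseteq> S"
  shows "W2 \<subseteq> {x. f x \<in> S}"
proof -
  have "W2 \<subseteq> {x \<in> W2. f x \<in> S}"
  proof (rule generates_induct[OF B(1)])
    show "cv.subspace {x \<in> W2. f x \<in> S}"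
      by (rule subspace_clinear_preimage[OF weak_module_subspace[OF W2_module] hom_spaceD(1)[OF f] S(1)])
    show "B \<subseteq> {x \<in> W2. f x \<in> S}" using B(2) \<open>f ` B \<subseteq> S\<close> by blast
    show "Y2' v n x \<in> {x \<in> W2. f x \<in> S}" if "v \<in> vspace V2" "x \<in> {x \<in> W2. f x \<in> S}" for v n x
      using that hom_spaceD(3)[OF f] S(2) weak_module_mem[OF W2_module] by auto
  qed blast
  then show ?thesis by blast
qed

lemma hom_space_eq_zero:
  assumes "generates V2 W2 Y2' B" "B \<subseteq> W2" "f \<in> Hom" "\<And>b. b \<in> B \<Longrightarrow> f b = 0"
  shows "f = 0"
proof
  fix x
  have "W2 \<subseteq> {x. f x \<in> {0}}"
    using assms Y2_zero by (intro hom_space_image_submodule cv.subspace_single_0) auto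
  then show "f x = 0 x" using hom_spaceD(4)[OF assms(3)] by (cases "x \<in> W2") auto
qed

lemma hom_vop_truncation:
  assumes B: "generates V2 W2 Y2' B" "finite B" "B \<subseteq> W2" and u: "u \<in> vspace V1" and f: "f \<in> Hom"
  shows "\<exists>N::int. \<forall>n\<ge>N. hom_vop Y1 u n f = 0"
proof -
  have "\<forall>b\<in>B. \<exists>N::int. \<forall>n\<ge>N. Y1 u n (f b) = 0"
    using weak_module_truncation[OF W_V1_module u hom_space_apply_mem[OF f]] by blast
  then obtain Nb where Nb: "\<And>b n. b \<in> B \<Longrightarrow> n \<ge> Nb b \<Longrightarrow> Y1 u n (f b) = 0" by metis
  define N where "N = Max (insert 0 (Nb ` B))"
  have N: "b \<in> B \<Longrightarrow> Nb b \<le> N" for b unfolding N_def using B(2) by simp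
  let ?S = "{y \<in> W. \<forall>n\<in>{N..}. Y1 u n y = 0}"
  have "cv.subspace ?S"
    using subspace_common_kernel[OF weak_module_subspace[OF W_V1_module], of "{N..}" "\<lambda>n. Y1 u n"]
      weak_module_clinear[OF W_V1_module u] by blast
  moreover have "Y2 v m y \<in> ?S" if v: "v \<in> vspace V2" and y: "y \<in> ?S" for v m y
  proof -
    have "Y1 u n (Y2 v m y) = 0" if "n \<in> {N..}" for n
      using actions_commute[OF u v] y that Y2_zero[OF v] by simp
    then show ?thesis using weak_module_mem[OF W_V2_module v] y by simp
  qed
  moreover have "f b \<in> ?S" if "b \<in> B" for b
    using hom_space_apply_mem[OF f] Nb[OF that] N[OF that] by simp
  then have "f ` B \<subseteq> ?S" by blast
  ultimately have W2_S: "W2 \<subseteq> {x. f x \<in> ?S}" by (rule hom_space_image_submodule[OF B(1,3) f])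
  have "hom_vop Y1 u n f x = 0" if "n \<ge> N" for n x
  proof (cases "x \<in> W2")
    case True
    then show ?thesis using W2_S that unfolding hom_vop_def by auto
  next
    case False
    then show ?thesis using hom_spaceD(4)[OF f] Y1_zero[OF u] unfolding hom_vop_def by simp
  qed
  then show ?thesis by (auto simp: fun_eq_iff)
qed

lemma hom_vop_zero: "u \<in> vspace V1 \<Longrightarrow> hom_vop Y1 u n (0 :: 'm2 \<Rightarrow> 'm) = 0"
  unfolding hom_vop_def using Y1_zero by (simp add: fun_eq_iff)

lemma Y1_zero_vertex: "cv.subspace (vspace V1) \<Longrightarrow> w \<in> W \<Longrightarrow> Y1 0 n w = 0"
  using clinear_on_zero[OF weak_module_clinear_vertex[OF W_V1_module] cv.subspace_0] .

lemma hom_jacobi: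
  assumes V1: "weak_module V1 (vspace V1) (vop V1)"
    and B: "generates V2 W2 Y2' B" "finite B" "B \<subseteq> W2"
  shows "jacobi V1 Hom (hom_vop Y1)"
  unfolding jacobi_def
proof (intro ballI allI)
  fix u v f l m n
  assume u: "u \<in> vspace V1" and v: "v \<in> vspace V1" and f: "f \<in> Hom"
  let ?A = "\<lambda>i::nat. ((of_int m :: complex) gchoose i) *\<^sub>C
                      hom_vop Y1 (vop V1 u (l + int i) v) (m + n - int i) f"
  let ?B = "\<lambda>i::nat. ((-1) ^ i * ((of_int l :: complex) gchoose i)) *\<^sub>C
                      hom_vop Y1 u (l + m - int i) (hom_vop Y1 v (n + int i) f)"
  let ?C = "\<lambda>i::nat. (((-1::complex) powi (l + int i)) * ((of_int l :: complex) gchoose i)) *\<^sub>C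
                      hom_vop Y1 v (l + n - int i) (hom_vop Y1 u (m + int i) f)"
  obtain Nuv where Nuv: "\<And>k. k \<ge> Nuv \<Longrightarrow> vop V1 u k v = 0"
    using weak_module_truncation[OF V1 u v] by blast
  obtain Nv where Nv: "\<And>k. k \<ge> Nv \<Longrightarrow> hom_vop Y1 v k f = 0"
    using hom_vop_truncation[OF B v f] by blast
  obtain Nu where Nu: "\<And>k. k \<ge> Nu \<Longrightarrow> hom_vop Y1 u k f = 0"
    using hom_vop_truncation[OF B u f] by blast
  have A0: "?A i = 0" if "i \<ge> nat (Nuv - l)" for i
    using that Nuv[of "l + int i"] Y1_zero_vertex[OF weak_module_subspace[OF V1]]
      hom_space_apply_mem[OF f]
    unfolding hom_vop_def by (simp add: fun_eq_iff scaleC_fun_def)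
  have B0: "?B i = 0" if "i \<ge> nat (Nv - n)" for i
  proof -
    have "hom_vop Y1 v (n + int i) f = 0" using that by (intro Nv) simp
    then show ?thesis using hom_vop_zero[OF u] by simp
  qed
  have C0: "?C i = 0" if "i \<ge> nat (Nu - m)" for i
  proof -
    have "hom_vop Y1 u (m + int i) f = 0" using that by (intro Nu) simp
    then show ?thesis using hom_vop_zero[OF v] by simp
  qed
  \<comment> \<open>Evaluation commutes with Sum_any only for sums with finitely many nonzero terms.\<close>
  show "Sum_any ?A = Sum_any ?B - Sum_any ?C"
  proof
    fix x
    have "Sum_any ?A x = Sum_any (\<lambda>i. ?A i x)"
      by (rule Sum_any_fun_apply[where K = "nat (Nuv - l)"]) (rule A0)
    also have "\<dots> = Sum_any (\<lambda>i. ?B i x) - Sum_any (\<lambda>i. ?C i x)"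
      using weak_module_jacobi[OF W_V1_module] u v hom_space_apply_mem[OF f, of x]
      unfolding jacobi_def hom_vop_def scaleC_fun_def by blast
    also have "Sum_any (\<lambda>i. ?B i x) = Sum_any ?B x"
      by (rule Sum_any_fun_apply[where K = "nat (Nv - n)", symmetric]) (rule B0)
    also have "Sum_any (\<lambda>i. ?C i x) = Sum_any ?C x"
      by (rule Sum_any_fun_apply[where K = "nat (Nu - m)", symmetric]) (rule C0)
    finally show "Sum_any ?A x = (Sum_any ?B - Sum_any ?C) x" by simp
  qed
qed

lemma hom_weak_module:
  assumes "weak_module V1 (vspace V1) (vop V1)" and "finitely_generated V2 W2 Y2'"
  shows "weak_module V1 Hom (hom_vop Y1)"
proof -
  obtain B where B: "generates V2 W2 Y2' B" "finite B" "B \<subseteq> W2"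
    using finitely_generated_obtain_generators[OF assms(2)] .
  show ?thesis
    unfolding weak_module_def
    using subspace_hom_space hom_vop_mem hom_vop_clinear hom_vop_clinear_vertex
      hom_vop_truncation[OF B] hom_vop_vacuum hom_jacobi[OF assms(1) B]
    by blast
qed

end

section \<open>The grading of Hom_V2(W2, W)\<close>

locale hom_space_grading = hom_space_setting +
  assumes conf_V1: "conf V1 \<in> vspace V1" and conf_V2: "conf V2 \<in> vspace V2"
begin

abbreviation "L1 \<equiv> vir V1 Y1 0"
abbreviation "L2 \<equiv> vir V2 Y2 0"
abbreviation "L2' \<equiv> vir V2 Y2' 0"
abbreviation "L \<equiv> \<lambda>w. L1 w + L2 w"
abbreviation "L_Hom \<equiv> vir V1 (hom_vop Y1) 0"

lemma L_Hom_apply: "L_Hom f = (\<lambda>x. L1 (f x))"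
  by (simp add: vir_def hom_vop_def)

lemma L1_clinear: "clinear_on W L1"
  unfolding vir_def using weak_module_clinear[OF W_V1_module conf_V1] .

lemma L1_mem: "y \<in> W \<Longrightarrow> L1 y \<in> W"
  unfolding vir_def using weak_module_mem[OF W_V1_module conf_V1] .

lemma L2_clinear: "clinear_on W L2"
  unfolding vir_def using weak_module_clinear[OF W_V2_module conf_V2] .

lemma L2_mem: "y \<in> W \<Longrightarrow> L2 y \<in> W"
  unfolding vir_def using weak_module_mem[OF W_V2_module conf_V2] .

lemma L1_commute_Y2: "v \<in> vspace V2 \<Longrightarrow> y \<in> W \<Longrightarrow> L1 (Y2 v n y) = Y2 v n (L1 y)"
  unfolding vir_def using actions_commute[OF conf_V1] by simp

lemma L_Hom_clinear: "clinear_on Hom L_Hom"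
  unfolding vir_def using hom_vop_clinear[OF conf_V1] .

lemma Y2_span_L1_eigsp:
  assumes v: "v \<in> vspace V2" and y: "y \<in> cv.span (\<Union>h\<in>K. eigsp W L1 h)"
  shows "Y2 v n y \<in> cv.span (\<Union>h\<in>K. eigsp W L1 h)"
proof (rule span_UN_invariant[OF weak_module_subspace[OF W_V2_module]
      weak_module_clinear[OF W_V2_module v] eigsp_subset _ y])
  fix h z assume "z \<in> eigsp W L1 h"
  then show "Y2 v n z \<in> eigsp W L1 h"
    using eigsp_invariant[where T = L1, OF weak_module_clinear[OF W_V2_module v, where n = n]
        weak_module_mem[OF W_V2_module v, where n = n] L1_commute_Y2[OF v, where n = n, symmetric]]
    by blast
qed

lemma hom_space_range_finite_L1_eigsp:
  assumes B: "generates V2 W2 Y2' B" "finite B" "B \<subseteq> W2"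
    and ss: "acts_semisimply W L1" and f: "f \<in> Hom"
  obtains hs where "\<And>x. f x \<in> cv.span (\<Union>h\<in>set hs. eigsp W L1 h)"
proof -
  have "f ` B \<subseteq> W" using hom_space_apply_mem[OF f] by blast
  then have "f ` B \<subseteq> cv.span (\<Union>h. eigsp W L1 h)"
    using ss unfolding acts_semisimply_def by (rule ord_le_eq_trans)
  from finite_subset_span_UN[OF finite_imageI[OF B(2)] this]
  obtain H where "finite H" "f ` B \<subseteq> cv.span (\<Union>h\<in>H. eigsp W L1 h)"
    by blast
  moreover obtain hs where "set hs = H" using finite_list[OF \<open>finite H\<close>] by blast
  ultimately have "f ` B \<subseteq> cv.span (\<Union>h\<in>set hs. eigsp W L1 h)" by simp
  then have "W2 \<subseteq> {x. f x \<in> cv.span (\<Union>h\<in>set hs. eigsp W L1 h)}"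
    using hom_space_image_submodule[OF B(1,3) f cv.subspace_span Y2_span_L1_eigsp] by blast
  then have "f x \<in> cv.span (\<Union>h\<in>set hs. eigsp W L1 h)" for x
    using hom_spaceD(4)[OF f] cv.span_zero by (cases "x \<in> W2") auto
  then show ?thesis by (rule that)
qed

lemma hom_eig_proj_mem:
  assumes "f \<in> Hom"
  shows "(\<lambda>x. eig_proj L1 hs h (f x)) \<in> Hom"
proof (rule hom_space_compose[OF _ _ _ assms])
  have W: "cv.subspace W" using weak_module_subspace[OF W_V1_module] .
  show "clinear_on W (eig_proj L1 hs h)" using eig_proj_clinear[OF W L1_clinear L1_mem] .
  show "eig_proj L1 hs h y \<in> W" if "y \<in> W" for y using eig_proj_mem[OF W L1_clinear L1_mem that] .
  show "eig_proj L1 hs h (Y2 v n y) = Y2 v n (eig_proj L1 hs h y)"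
    if v: "v \<in> vspace V2" and y: "y \<in> W" for v n y
  proof (rule sym, rule eig_proj_commute[OF W L1_clinear L1_mem])
    show "Y2 v n (L1 z) = L1 (Y2 v n z)" if "z \<in> W" for z
      using L1_commute_Y2[OF v that] by simp
  qed (use weak_module_clinear[OF W_V2_module v] weak_module_mem[OF W_V2_module v] y in auto)
qed

lemma hom_acts_semisimply:
  assumes B: "generates V2 W2 Y2' B" "finite B" "B \<subseteq> W2" and ss: "acts_semisimply W L1"
  shows "acts_semisimply Hom L_Hom"
proof (rule acts_semisimplyI[OF subspace_hom_space], rule subsetI)
  fix f assume f: "f \<in> Hom"
  have W: "cv.subspace W" using weak_module_subspace[OF W_V1_module] .
  obtain hs where f_hs: "\<And>x. f x \<in> cv.span (\<Union>h\<in>set hs. eigsp W L1 h)"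
    using hom_space_range_finite_L1_eigsp[OF B ss f] by blast
  define f_h where "f_h h = (\<lambda>x. eig_proj L1 hs h (f x))" for h
  have "L_Hom (f_h h) = h *\<^sub>C f_h h" for h
    using eig_proj_span(2)[OF W L1_clinear L1_mem f_hs] unfolding L_Hom_apply f_h_def eigsp_def
    by (simp add: fun_eq_iff scaleC_fun_def)
  then have "f_h h \<in> eigsp Hom L_Hom h" for h
    unfolding eigsp_def f_h_def using hom_eig_proj_mem[OF f] by simp
  then have "(\<Sum>h\<in>set hs. f_h h) \<in> cv.span (\<Union>h. eigsp Hom L_Hom h)"
    by (intro cv.span_sum cv.span_base) blast
  moreover have "(\<Sum>h\<in>set hs. f_h h) = f"
    using eig_proj_span(1)[OF W L1_clinear L1_mem f_hs] unfolding f_h_def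
    by (simp add: fun_eq_iff sum_fun_apply)
  ultimately show "f \<in> cv.span (\<Union>h. eigsp Hom L_Hom h)" by simp
qed

lemma hom_eigvec_apply:
  assumes f: "f \<in> eigsp Hom L_Hom h" and c: "c \<in> eigsp W2 L2' k"
  shows "f c \<in> eigsp W L (h + k)"
proof -
  have f_Hom: "f \<in> Hom" and "L_Hom f = h *\<^sub>C f" using f unfolding eigsp_def by auto
  then have "L1 (f c) = h *\<^sub>C f c" unfolding L_Hom_apply by (simp add: fun_eq_iff scaleC_fun_def)
  moreover have c_W2: "c \<in> W2" and "L2' c = k *\<^sub>C c" using c unfolding eigsp_def by auto
  then have "L2 (f c) = k *\<^sub>C f c"
    using hom_spaceD(3)[OF f_Hom conf_V2 c_W2, symmetric]
      clinear_on_scale[OF hom_spaceD(1)[OF f_Hom] c_W2]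
    unfolding vir_def by simp
  ultimately show ?thesis
    using hom_space_apply_mem[OF f_Hom] unfolding eigsp_def by (simp add: scaleC_add_left)
qed

lemma hom_fin_dim_eigsp:
  assumes C: "generates V2 W2 Y2' C" "finite C" "\<And>c. c \<in> C \<Longrightarrow> c \<in> eigsp W2 L2' (\<kappa> c)"
    and fin_dim_W: "\<And>h. fin_dim (eigsp W L h)"
  shows "fin_dim (eigsp Hom L_Hom h)"
proof -
  have C_W2: "C \<subseteq> W2" using C(3) eigsp_subset by blast
  let ?restrict = "\<lambda>f x. if x \<in> C then f x else 0"
  have hom: "module_hom scaleC scaleC ?restrict"
    unfolding module_hom_scaleC_iff by (simp add: fun_eq_iff scaleC_fun_def)
  have E: "cv.subspace (eigsp Hom L_Hom h)"
    using subspace_eigsp[OF subspace_hom_space L_Hom_clinear] .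
  have "inj_on ?restrict (eigsp Hom L_Hom h)"
    unfolding module_hom.inj_on_iff_eq_0[OF hom E]
  proof (intro ballI impI)
    fix f assume f: "f \<in> eigsp Hom L_Hom h" and "?restrict f = 0"
    then have "f c = 0" if "c \<in> C" for c using fun_cong[of _ _ c] that by fastforce
    then show "f = 0" using hom_space_eq_zero[OF C(1) C_W2] f unfolding eigsp_def by blast
  qed
  moreover have "?restrict ` eigsp Hom L_Hom h \<subseteq>
      {g. \<forall>x. (x \<in> C \<longrightarrow> g x \<in> eigsp W L (h + \<kappa> x)) \<and> (x \<notin> C \<longrightarrow> g x = 0)}"
  proof (rule image_subsetI)
    fix f assume "f \<in> eigsp Hom L_Hom h"
    then show "?restrict f \<in> {g. \<forall>x. (x \<in> C \<longrightarrow> g x \<in> eigsp W L (h + \<kappa> x)) \<and> (x \<notin> C \<longrightarrow> g x = 0)}"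
      using hom_eigvec_apply C(3) by simp
  qed
  moreover have "fin_dim {g. \<forall>x. (x \<in> C \<longrightarrow> g x \<in> eigsp W L (h + \<kappa> x)) \<and> (x \<notin> C \<longrightarrow> g x = 0)}"
    by (rule fin_dim_finite_support[OF C(2) fin_dim_W])
  ultimately show ?thesis by (rule fin_dim_inj_linear_image[OF hom E])
qed

lemma hom_eigsp_lower_bound:
  assumes C: "generates V2 W2 Y2' C" "finite C" "\<And>c. c \<in> C \<Longrightarrow> c \<in> eigsp W2 L2' (\<kappa> c)"
    and bounded_W: "\<And>h. \<exists>N::int. \<forall>n::int. n < N \<longrightarrow> eigsp W L (h + of_int n) = {0}"
  shows "\<exists>N::int. \<forall>n::int. n < N \<longrightarrow> eigsp Hom L_Hom (h + of_int n) = {0}"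
proof -
  have C_W2: "C \<subseteq> W2" using C(3) eigsp_subset by blast
  have "\<forall>c\<in>C. \<exists>N::int. \<forall>n::int. n < N \<longrightarrow> eigsp W L (h + \<kappa> c + of_int n) = {0}"
    using bounded_W by blast
  then obtain Nc where Nc: "\<And>c n. c \<in> C \<Longrightarrow> n < Nc c \<Longrightarrow> eigsp W L (h + \<kappa> c + of_int n) = {0}"
    by metis
  define N where "N = Min (insert 0 (Nc ` C))"
  have N: "c \<in> C \<Longrightarrow> N \<le> Nc c" for c unfolding N_def using C(2) by simp
  have "eigsp Hom L_Hom (h + of_int n) = {0}" if n: "n < N" for n
  proof
    show "eigsp Hom L_Hom (h + of_int n) \<subseteq> {0}"
    proof
      fix f assume f: "f \<in> eigsp Hom L_Hom (h + of_int n)"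
      have "f c = 0" if c: "c \<in> C" for c
      proof -
        have "f c \<in> eigsp W L (h + of_int n + \<kappa> c)" using hom_eigvec_apply[OF f C(3)[OF c]] .
        also have "\<dots> = {0}" using Nc[OF c] N[OF c] n by (simp add: add.commute add.left_commute)
        finally show ?thesis by simp
      qed
      then have "f = 0" using hom_space_eq_zero[OF C(1) C_W2] f unfolding eigsp_def by blast
      then show "f \<in> {0}" by simp
    qed
    show "{0} \<subseteq> eigsp Hom L_Hom (h + of_int n)"
      using cv.subspace_0[OF subspace_eigsp[OF subspace_hom_space L_Hom_clinear]] by simp
  qed
  then show ?thesis by blast
qed

lemma hom_ordinary_module:
  assumes "weak_module V1 (vspace V1) (vop V1)" and fg: "finitely_generated V2 W2 Y2'"
    and W2_ordinary: "ordinary_module V2 W2 Y2'"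
    and W_ordinary: "ordinary_tensor_module V1 V2 W Y1 Y2"
    and ss: "acts_semisimply W L1 \<or> acts_semisimply W L2"
  shows "ordinary_module V1 Hom (hom_vop Y1)"
proof -
  have ss_L: "acts_semisimply W L" and fin_dim_W: "\<And>h. fin_dim (eigsp W L h)"
    and bounded_W: "\<And>h. \<exists>N::int. \<forall>n::int. n < N \<longrightarrow> eigsp W L (h + of_int n) = {0}"
    using W_ordinary unfolding ordinary_tensor_module_def ordinary_grading_def by auto
  have "L1 (L2 y) = L2 (L1 y)" if "y \<in> W" for y
    unfolding vir_def using actions_commute[OF conf_V1 conf_V2 that] .
  then have ss_L1: "acts_semisimply W L1"
    using ss acts_semisimply_summand[OF weak_module_subspace[OF W_V1_module] L1_clinear L1_mem
        L2_clinear L2_mem _ ss_L] by blast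
  have ss_L2': "acts_semisimply W2 L2'"
    using W2_ordinary unfolding ordinary_module_def ordinary_grading_def by blast
  obtain B where B: "generates V2 W2 Y2' B" "finite B" "B \<subseteq> W2"
    using finitely_generated_obtain_generators[OF fg] .
  obtain C \<kappa> where C: "generates V2 W2 Y2' C" "finite C" "\<And>c. c \<in> C \<Longrightarrow> c \<in> eigsp W2 L2' (\<kappa> c)"
    using generates_by_eigvecs[OF ss_L2' B] by blast
  have "ordinary_grading Hom L_Hom"
    unfolding ordinary_grading_def
    using hom_acts_semisimply[OF B ss_L1] hom_fin_dim_eigsp[OF C fin_dim_W]
      hom_eigsp_lower_bound[OF C bounded_W] by blast
  then show ?thesis
    unfolding ordinary_module_def using hom_weak_module[OF assms(1) fg] by blast
qed

end

theorem proposition4p8: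
  fixes V1 :: "'v1::cvec voa_data" and V2 :: "'v2::cvec voa_data"
    and W :: "'m::cvec set" and Y1 :: "'v1 \<Rightarrow> int \<Rightarrow> 'm \<Rightarrow> 'm" and Y2 :: "'v2 \<Rightarrow> int \<Rightarrow> 'm \<Rightarrow> 'm"
    and W2 :: "'m2::cvec set" and Y2' :: "'v2 \<Rightarrow> int \<Rightarrow> 'm2 \<Rightarrow> 'm2"
  assumes "is_voa V1" and "is_voa V2"
    and "weak_tensor_module V1 V2 W Y1 Y2"
    and "weak_module V2 W2 Y2'"
    and "finitely_generated V2 W2 Y2'"
  shows "weak_module V1 (hom_space V2 W2 Y2' W Y2) (hom_vop Y1)
    \<and> ((ordinary_module V2 W2 Y2' \<and> ordinary_tensor_module V1 V2 W Y1 Y2 \<and>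
         (acts_semisimply W (vir V1 Y1 0) \<or> acts_semisimply W (vir V2 Y2 0)))
        \<longrightarrow> ordinary_module V1 (hom_space V2 W2 Y2' W Y2) (hom_vop Y1))"
proof -
  have V1: "weak_module V1 (vspace V1) (vop V1)" and "conf V1 \<in> vspace V1"
    using assms(1) unfolding is_voa_def by blast+
  moreover have "conf V2 \<in> vspace V2" using assms(2) unfolding is_voa_def by blast
  ultimately interpret hom_space_grading V1 V2 W Y1 Y2 W2 Y2'
    using assms(3,4) by unfold_locales
  show ?thesis using hom_weak_module[OF V1 assms(5)] hom_ordinary_module[OF V1 assms(5)] by blast
qed

end
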